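(* Let $F$ be a non-archimedean local field of characteristic not $2$ with valuation ring $\mathfrak{o}$ and maximal ideal $\mathfrak{p}$, let $\lambda\in\mathfrak{o}$ with $ord_\mathfrak{p}(\lambda)\in\{0,1\}$, and let $H=Mat(2,F)$ with the involution $$\begin{pmatrix} a & b\\ c& d\end{pmatrix}^{\ddagger_\lambda}=\begin{pmatrix} a & c/\lambda\\ b\lambda & d\end{pmatrix}.$$ Suppose $\Lambda$ is a lattice in $F^2$ which has an orthogonal basis with respect to $b$. Then there exists $g\in GO(Mat(2,F),\ddagger_\lambda)$ such that $$End(\Lambda)\cap End(\Lambda^\sharp)\subset g\bigl(Mat(2,\mathfrak{o})\cap Mat(2,\mathfrak{o})^{\ddagger_\lambda}\bigr)g^{-1}.$$
   Context: Here $b$ is the symmetric bilinear form on $F^2$ given by $b((x_1,y_1),(x_2,y_2))=\lambda x_1x_2+y_1y_2$, whose adjoint involution is $\ddagger_\lambda$ (i.e. $b(v,\sigma w)=b(\sigma^{\ddagger_\lambda}v,w)$). A lattice is a finitely generated $\mathfrak{o}$-submodule spanning $F^2$; $\Lambda^\sharp=\{v: b(v,\Lambda)\subset\mathfrak{o}\}$; $End(\Lambda)=\{\sigma\in Mat(2,F):\sigma\Lambda\subset\Lambda\}$; $X^{\ddagger_\lambda}=\{x^{\ddagger_\lambda}:x\in X\}$. $GO(Mat(2,F),\ddagger_\lambda)=\{x\in GL(2,F): x^{\ddagger_\lambda}x\in F\}$. *)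

theory Defs
  imports "HOL-Analysis.Analysis"
begin

text \<open>A normalized discrete valuation on a field, given by its values on nonzero elements
  (the value at 0 is irrelevant and conventionally infinity).\<close>
definition discrete_valuation :: "('a::field \<Rightarrow> int) \<Rightarrow> bool" where
  "discrete_valuation v \<longleftrightarrow>
     (\<forall>x y. x \<noteq> 0 \<and> y \<noteq> 0 \<longrightarrow> v (x * y) = v x + v y) \<and>
     (\<forall>x y. x \<noteq> 0 \<and> y \<noteq> 0 \<and> x + y \<noteq> 0 \<longrightarrow> min (v x) (v y) \<le> v (x + y)) \<and>
     (\<exists>x. x \<noteq> 0 \<and> v x = 1)"

definition val_ring :: "('a::field \<Rightarrow> int) \<Rightarrow> 'a set" where
  "val_ring v = {x. x = 0 \<or> 0 \<le> v x}"

definition max_ideal :: "('a::field \<Rightarrow> int) \<Rightarrow> 'a set" where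
  "max_ideal v = {x. x = 0 \<or> 0 < v x}"

definition val_complete :: "('a::field \<Rightarrow> int) \<Rightarrow> bool" where
  "val_complete v \<longleftrightarrow>
     (\<forall>s :: nat \<Rightarrow> 'a.
        (\<forall>N::int. \<exists>M. \<forall>m\<ge>M. \<forall>n\<ge>M. s m - s n = 0 \<or> N \<le> v (s m - s n)) \<longrightarrow>
        (\<exists>L. \<forall>N::int. \<exists>M. \<forall>n\<ge>M. s n - L = 0 \<or> N \<le> v (s n - L)))"

definition nonarch_local_field :: "('a::field \<Rightarrow> int) \<Rightarrow> bool" where
  "nonarch_local_field v \<longleftrightarrow>
     discrete_valuation v \<and> val_complete v \<and>
     finite ((\<lambda>x. {y \<in> val_ring v. x - y \<in> max_ideal v}) ` val_ring v)"

definition bform :: "'a::field \<Rightarrow> 'a^2 \<Rightarrow> 'a^2 \<Rightarrow> 'a" where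
  "bform lam u w = lam * (u$1) * (w$1) + (u$2) * (w$2)"

definition invol :: "'a::field \<Rightarrow> 'a^2^2 \<Rightarrow> 'a^2^2" where
  "invol lam A = (\<chi> i j. if i = 1 \<and> j = 1 then A$1$1
                        else if i = 1 \<and> j = 2 then A$2$1 / lam
                        else if i = 2 \<and> j = 1 then A$1$2 * lam
                        else A$2$2)"

definition is_lattice :: "('a::field \<Rightarrow> int) \<Rightarrow> ('a^2) set \<Rightarrow> bool" where
  "is_lattice v L \<longleftrightarrow>
     (\<exists>S. finite S \<and> S \<subseteq> L \<and>
        L = {w. \<exists>c. (\<forall>s\<in>S. c s \<in> val_ring v) \<and> w = (\<Sum>s\<in>S. c s *s s)}) \<and>
     (\<forall>w. \<exists>S c. finite S \<and> S \<subseteq> L \<and> w = (\<Sum>s\<in>S. c s *s s))"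

definition has_orth_basis :: "('a::field \<Rightarrow> int) \<Rightarrow> 'a \<Rightarrow> ('a^2) set \<Rightarrow> bool" where
  "has_orth_basis v lam L \<longleftrightarrow>
     (\<exists>e1 e2. bform lam e1 e2 = 0 \<and>
        (\<forall>a c. a \<in> val_ring v \<and> c \<in> val_ring v \<and> a *s e1 + c *s e2 = 0 \<longrightarrow> a = 0 \<and> c = 0) \<and>
        L = {a *s e1 + c *s e2 | a c. a \<in> val_ring v \<and> c \<in> val_ring v})"

definition dual_lattice :: "('a::field \<Rightarrow> int) \<Rightarrow> 'a \<Rightarrow> ('a^2) set \<Rightarrow> ('a^2) set" where
  "dual_lattice v lam L = {w. \<forall>u\<in>L. bform lam w u \<in> val_ring v}"

definition End_lat :: "('a^2) set \<Rightarrow> ('a::field^2^2) set" where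
  "End_lat L = {\<sigma>. \<forall>u\<in>L. \<sigma> *v u \<in> L}"

definition Mat_o :: "('a::field \<Rightarrow> int) \<Rightarrow> ('a^2^2) set" where
  "Mat_o v = {A. \<forall>i j. A$i$j \<in> val_ring v}"

definition GO :: "'a::field \<Rightarrow> ('a^2^2) set" where
  "GO lam = {x. invertible x \<and> (\<exists>c. invol lam x ** x = mat c)}"

end

theory Submission
  imports Defs
begin

text \<open>Let \<open>e\<^sub>1, e\<^sub>2\<close> be an orthogonal basis of \<open>\<Lambda>\<close> with \<open>a\<^sub>i = b(e\<^sub>i,e\<^sub>i)\<close> and \<open>d = det(e\<^sub>1,e\<^sub>2)\<close>;
  then \<open>a\<^sub>1 a\<^sub>2 = \<lambda> d\<^sup>2\<close>.  With \<open>s = a\<^sub>2/d\<close> the matrix \<open>g\<close> with columns \<open>s e\<^sub>1, e\<^sub>2\<close> satisfies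
  \<open>g\<^sup>\<ddagger> g = a\<^sub>2\<close>, so \<open>g \<in> GO\<close>.  If \<open>\<sigma>\<close> preserves \<open>\<Lambda>\<close> and \<open>\<Lambda>\<^sup>\<sharp>\<close>, its matrix in the basis \<open>e\<^sub>1, e\<^sub>2\<close> has
  entries \<open>a, b, c, t \<in> \<o>\<close>, and testing \<open>\<sigma>(e\<^sub>i/a\<^sub>i) \<in> \<Lambda>\<^sup>\<sharp>\<close> against \<open>e\<^sub>j\<close> gives \<open>c a\<^sub>2/a\<^sub>1, b a\<^sub>1/a\<^sub>2 \<in> \<o>\<close>.
  Hence the entries \<open>y\<close> of \<open>g\<^sup>-\<^sup>1 \<sigma> g\<close> that are not already in \<open>\<o>\<close> satisfy \<open>\<lambda> y\<^sup>2 \<in> \<o>\<close>, which forces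
  \<open>y \<in> \<o>\<close> because \<open>ord \<lambda> \<le> 1\<close>.\<close>

lemma val_mult:
  "discrete_valuation v \<Longrightarrow> x \<noteq> 0 \<Longrightarrow> y \<noteq> 0 \<Longrightarrow> v (x * y) = v x + v y"
  unfolding discrete_valuation_def by blast

lemma val_one: "discrete_valuation v \<Longrightarrow> v 1 = 0"
  using val_mult[of v 1 1] by simp

lemma val_inverse: "discrete_valuation v \<Longrightarrow> x \<noteq> 0 \<Longrightarrow> v (inverse x) = - v x"
  using val_mult[of v x "inverse x"] val_one[of v] by simp

lemma one_in_val_ring: "discrete_valuation v \<Longrightarrow> 1 \<in> val_ring v"
  by (simp add: val_ring_def val_one)

lemma zero_in_val_ring [simp]: "0 \<in> val_ring v"
  by (simp add: val_ring_def)

lemma val_ring_mult: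
  "discrete_valuation v \<Longrightarrow> x \<in> val_ring v \<Longrightarrow> y \<in> val_ring v \<Longrightarrow> x * y \<in> val_ring v"
  by (cases "x = 0 \<or> y = 0") (auto simp: val_ring_def val_mult)

lemma val_ring_if_times_square_in_val_ring:
  fixes v :: "'a::field \<Rightarrow> int"
  assumes dv: "discrete_valuation v" and "lam \<noteq> 0" and "v lam \<le> 1"
    and "lam * y ^ 2 \<in> val_ring v"
  shows "y \<in> val_ring v"
proof (cases "y = 0")
  case False
  have "v (lam * y ^ 2) = v lam + 2 * v y"
    using assms(2) False by (simp add: power2_eq_square val_mult[OF dv])
  then show ?thesis
    using assms(2-4) False by (auto simp: val_ring_def)
qed (simp add: val_ring_def)

lemma val_ring_common_multiple:
  fixes v :: "'a::field \<Rightarrow> int"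
  assumes dv: "discrete_valuation v" and "\<alpha> \<noteq> 0 \<or> \<beta> \<noteq> 0"
  shows "\<exists>\<gamma>. \<gamma> \<noteq> 0 \<and> \<gamma> * \<alpha> \<in> val_ring v \<and> \<gamma> * \<beta> \<in> val_ring v"
proof -
  have in_val_ring: "inverse x * y \<in> val_ring v" if "x \<noteq> 0" "y = 0 \<or> v x \<le> v y" for x y
    using that by (cases "y = 0") (auto simp: val_ring_def val_mult[OF dv] val_inverse[OF dv])
  consider "\<alpha> \<noteq> 0" "\<beta> = 0 \<or> v \<alpha> \<le> v \<beta>" | "\<beta> \<noteq> 0" "\<alpha> = 0 \<or> v \<beta> \<le> v \<alpha>"
    using assms(2) by linarith
  then show ?thesis
  proof cases
    case 1
    then show ?thesis
      using in_val_ring[of \<alpha> \<alpha>] in_val_ring[of \<alpha> \<beta>] by (intro exI[of _ "inverse \<alpha>"]) auto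
  next
    case 2
    then show ?thesis
      using in_val_ring[of \<beta> \<beta>] in_val_ring[of \<beta> \<alpha>] by (intro exI[of _ "inverse \<beta>"]) auto
  qed
qed

lemma independent_if_val_ring_independent:
  fixes v :: "'a::field \<Rightarrow> int" and e1 e2 :: "'a^'n"
  assumes dv: "discrete_valuation v"
    and ind: "\<forall>a c. a \<in> val_ring v \<and> c \<in> val_ring v \<and> a *s e1 + c *s e2 = 0 \<longrightarrow> a = 0 \<and> c = 0"
    and rel: "\<alpha> *s e1 + \<beta> *s e2 = 0"
  shows "\<alpha> = 0 \<and> \<beta> = 0"
proof (rule ccontr)
  assume "\<not> (\<alpha> = 0 \<and> \<beta> = 0)"
  then obtain \<gamma> where \<gamma>: "\<gamma> \<noteq> 0" "\<gamma> * \<alpha> \<in> val_ring v" "\<gamma> * \<beta> \<in> val_ring v"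
    using val_ring_common_multiple[OF dv] by blast
  have "(\<gamma> * \<alpha>) *s e1 + (\<gamma> * \<beta>) *s e2 = \<gamma> *s (\<alpha> *s e1 + \<beta> *s e2)"
    by (simp add: vec_eq_iff algebra_simps)
  then have "(\<gamma> * \<alpha>) *s e1 + (\<gamma> * \<beta>) *s e2 = 0"
    using rel by simp
  then have "\<gamma> * \<alpha> = 0 \<and> \<gamma> * \<beta> = 0"
    using ind \<gamma> by blast
  with \<gamma>(1) \<open>\<not> (\<alpha> = 0 \<and> \<beta> = 0)\<close> show False
    by simp
qed

definition mat2 :: "'a \<Rightarrow> 'a \<Rightarrow> 'a \<Rightarrow> 'a \<Rightarrow> 'a^2^2" where
  "mat2 p q r s = (\<chi> i j. if i = 1 then (if j = 1 then p else q) else (if j = 1 then r else s))"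

lemma mat2_nth [simp]:
  "mat2 p q r s $ 1 $ 1 = p" "mat2 p q r s $ 1 $ 2 = q"
  "mat2 p q r s $ 2 $ 1 = r" "mat2 p q r s $ 2 $ 2 = s"
  by (simp_all add: mat2_def)

lemma mat2_eq_iff: "mat2 p q r s = mat2 p' q' r' s' \<longleftrightarrow> p = p' \<and> q = q' \<and> r = r' \<and> s = s'"
  by (metis mat2_nth)

lemma mat2_cases: "A = mat2 (A$1$1) (A$1$2) (A$2$1) (A$2$2)"
  by (simp add: vec_eq_iff forall_2)

lemma mat2_mult:
  "mat2 p q r s ** mat2 p' q' r' s'
     = mat2 (p * p' + q * r') (p * q' + q * s') (r * p' + s * r') (r * q' + s * s')"
  by (simp add: vec_eq_iff forall_2 matrix_matrix_mult_def sum_2)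

lemma mat_eq_mat2: "mat c = mat2 c 0 0 c"
  by (simp add: vec_eq_iff forall_2 mat_def)

lemma det_mat2: "det (mat2 p q r s) = p * s - q * r"
  by (simp add: det_2)

lemma invol_mat2: "invol lam (mat2 p q r s) = mat2 p (r / lam) (q * lam) s"
  by (simp add: vec_eq_iff forall_2 invol_def)

lemma invol_invol: "lam \<noteq> 0 \<Longrightarrow> invol lam (invol lam A) = A"
  by (subst (1 2 3) mat2_cases) (simp add: invol_mat2)

lemma mat2_in_Mat_o:
  "mat2 p q r s \<in> Mat_o v \<longleftrightarrow>
     p \<in> val_ring v \<and> q \<in> val_ring v \<and> r \<in> val_ring v \<and> s \<in> val_ring v"
  by (simp add: Mat_o_def forall_2)

definition basis_matrix :: "'a^2 \<Rightarrow> 'a^2 \<Rightarrow> 'a^2^2" where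
  "basis_matrix f1 f2 = mat2 (f1$1) (f2$1) (f1$2) (f2$2)"

lemma matrix_mult_basis_matrix:
  fixes \<sigma> :: "'a::semiring_1^2^2"
  shows "\<sigma> ** basis_matrix f1 f2 = basis_matrix (\<sigma> *v f1) (\<sigma> *v f2)"
  by (simp add: basis_matrix_def vec_eq_iff forall_2 matrix_matrix_mult_def
      matrix_vector_mult_def sum_2)

lemma basis_matrix_mult_mat2:
  fixes f1 f2 :: "'a::comm_semiring_1^2"
  shows "basis_matrix f1 f2 ** mat2 p q r s = basis_matrix (p *s f1 + r *s f2) (q *s f1 + s *s f2)"
  by (simp add: basis_matrix_def mat2_mult algebra_simps)

lemma det_basis_matrix: "det (basis_matrix f1 f2) = f1$1 * f2$2 - f2$1 * f1$2"
  by (simp add: basis_matrix_def det_mat2)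

lemma det_basis_matrix_nonzero_if_independent:
  fixes e1 e2 :: "'a::field^2"
  assumes ind: "\<And>\<alpha> \<beta>. \<alpha> *s e1 + \<beta> *s e2 = 0 \<Longrightarrow> \<alpha> = 0 \<and> \<beta> = 0"
  shows "det (basis_matrix e1 e2) \<noteq> 0"
proof
  assume "det (basis_matrix e1 e2) = 0"
  then have "e2$2 *s e1 + (- e1$2) *s e2 = 0" "e2$1 *s e1 + (- e1$1) *s e2 = 0"
    by (auto simp: det_basis_matrix vec_eq_iff forall_2 algebra_simps)
  with ind have "e1$2 = 0" "e1$1 = 0"
    by (metis neg_equal_0_iff_equal)+
  then have "1 *s e1 + 0 *s e2 = 0"
    by (simp add: vec_eq_iff forall_2)
  from ind[OF this] show False
    by simp
qed

lemma invertible_matrix_inv: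
  assumes "invertible (g :: 'a::semiring_1^'n^'n)"
  shows "g ** matrix_inv g = mat 1" "matrix_inv g ** g = mat 1"
  using someI_ex[OF assms[unfolded invertible_def]] by (simp_all add: matrix_inv_def)

lemma conjugate_eq_if_intertwines:
  fixes g M \<sigma> :: "'a::semiring_1^'n^'n"
  assumes "invertible g" and "\<sigma> ** g = g ** M"
  shows "\<sigma> = g ** M ** matrix_inv g"
proof -
  have "\<sigma> = \<sigma> ** g ** matrix_inv g"
    using invertible_matrix_inv[OF assms(1)] by (simp add: matrix_mul_assoc[symmetric])
  with assms(2) show ?thesis
    by simp
qed

lemma bform_scale_left: "bform lam (k *s u) w = k * bform lam u w"
  by (simp add: bform_def algebra_simps)

lemma bform_add_left: "bform lam (u + u') w = bform lam u w + bform lam u' w"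
  by (simp add: bform_def algebra_simps)

lemma bform_scale_right: "bform lam u (k *s w) = k * bform lam u w"
  by (simp add: bform_def algebra_simps)

lemma bform_add_right: "bform lam u (w + w') = bform lam u w + bform lam u w'"
  by (simp add: bform_def algebra_simps)

lemma bform_commute: "bform lam u w = bform lam w u"
  by (simp add: bform_def algebra_simps)

lemma bform_diagonal_mult:
  "bform lam e1 e1 * bform lam e2 e2 = lam * det (basis_matrix e1 e2) ^ 2 + bform lam e1 e2 ^ 2"
  unfolding bform_def det_basis_matrix power2_eq_square by algebra

lemma invol_basis_matrix_mult_self:
  fixes lam :: "'a::field"
  assumes "lam \<noteq> 0"
  shows "invol lam (basis_matrix f1 f2) ** basis_matrix f1 f2
           = mat2 (bform lam f1 f1 / lam) (bform lam f1 f2 / lam) (bform lam f2 f1) (bform lam f2 f2)"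
  unfolding basis_matrix_def invol_mat2 mat2_mult mat2_eq_iff bform_def
  using assms by (simp add: field_simps)

lemma basis_matrix_in_GO:
  fixes lam :: "'a::field"
  assumes "lam \<noteq> 0" and "det (basis_matrix f1 f2) \<noteq> 0" and "bform lam f1 f2 = 0"
    and "bform lam f1 f1 = lam * c" and "bform lam f2 f2 = c"
  shows "basis_matrix f1 f2 \<in> GO lam"
proof -
  have "bform lam f2 f1 = 0"
    using assms(3) by (simp add: bform_commute)
  then have "invol lam (basis_matrix f1 f2) ** basis_matrix f1 f2 = mat c"
    using assms(1,3-5) by (simp add: invol_basis_matrix_mult_self mat_eq_mat2)
  with assms(2) show ?thesis
    by (auto simp: GO_def invertible_det_nz)
qed

definition o_span :: "('a::field \<Rightarrow> int) \<Rightarrow> 'a^'n \<Rightarrow> 'a^'n \<Rightarrow> ('a^'n) set" where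
  "o_span v e1 e2 = {a *s e1 + c *s e2 | a c. a \<in> val_ring v \<and> c \<in> val_ring v}"

lemma o_span_commute: "o_span v e1 e2 = o_span v e2 e1"
proof -
  have "o_span v e1 e2 \<subseteq> o_span v e2 e1" for e1 e2 :: "'a^'n"
    unfolding o_span_def by (force simp: add.commute)
  then show ?thesis
    by blast
qed

lemma basis_in_o_span:
  assumes "discrete_valuation v"
  shows "e1 \<in> o_span v e1 e2"
proof -
  have "e1 = 1 *s e1 + 0 *s e2"
    by (simp add: vec_eq_iff)
  then show ?thesis
    unfolding o_span_def using one_in_val_ring[OF assms] zero_in_val_ring by blast
qed

lemma dual_basis_in_dual_lattice:
  assumes "bform lam e1 e2 = 0" and "bform lam e1 e1 \<noteq> 0"
  shows "(1 / bform lam e1 e1) *s e1 \<in> dual_lattice v lam (o_span v e1 e2)"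
  using assms by (auto simp: dual_lattice_def o_span_def bform_scale_left bform_add_right bform_scale_right)

lemma End_dual_lattice_coeff_in_val_ring:
  fixes v :: "'a::field \<Rightarrow> int"
  assumes dv: "discrete_valuation v" and orth: "bform lam e1 e2 = 0"
    and nz: "bform lam e1 e1 \<noteq> 0"
    and \<sigma>: "\<sigma> \<in> End_lat (dual_lattice v lam (o_span v e1 e2))"
    and coords: "\<sigma> *v e1 = a *s e1 + c *s e2"
  shows "c * bform lam e2 e2 / bform lam e1 e1 \<in> val_ring v"
proof -
  have "\<sigma> *v ((1 / bform lam e1 e1) *s e1) \<in> dual_lattice v lam (o_span v e1 e2)"
    using \<sigma> dual_basis_in_dual_lattice[OF orth nz] by (auto simp: End_lat_def)
  then have "bform lam (\<sigma> *v ((1 / bform lam e1 e1) *s e1)) e2 \<in> val_ring v"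
    using basis_in_o_span[OF dv, of e2 e1] o_span_commute[of v e1 e2] by (auto simp: dual_lattice_def)
  then show ?thesis
    using orth by (simp add: coords vector_scalar_commute bform_scale_left bform_add_left)
qed

lemma similitude_of_orth_basis_in_GO:
  fixes lam :: "'a::field"
  assumes lam: "lam \<noteq> 0" and orth: "bform lam e1 e2 = 0" and det: "det (basis_matrix e1 e2) \<noteq> 0"
  defines "s \<equiv> bform lam e2 e2 / det (basis_matrix e1 e2)"
  shows "basis_matrix (s *s e1) e2 \<in> GO lam"
proof (rule basis_matrix_in_GO[OF lam])
  have rel: "bform lam e1 e1 * bform lam e2 e2 = lam * det (basis_matrix e1 e2) ^ 2"
    using bform_diagonal_mult[of lam e1 e2] orth by simp
  then have "bform lam e2 e2 \<noteq> 0"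
    using lam det by auto
  then show "det (basis_matrix (s *s e1) e2) \<noteq> 0"
    using det by (simp add: s_def det_basis_matrix algebra_simps)
  show "bform lam (s *s e1) e2 = 0"
    using orth by (simp add: bform_scale_left)
  show "bform lam (s *s e1) (s *s e1) = lam * bform lam e2 e2"
    using rel det by (simp add: s_def bform_scale_left bform_scale_right power2_eq_square field_simps)
qed (rule refl)

lemma mat2_in_Mat_o_inter_invol:
  fixes v :: "'a::field \<Rightarrow> int"
  assumes dv: "discrete_valuation v" and lam: "lam \<in> val_ring v" "lam \<noteq> 0"
    and "p \<in> val_ring v" "q \<in> val_ring v" "r / lam \<in> val_ring v" "s \<in> val_ring v"
  shows "mat2 p q r s \<in> Mat_o v \<inter> invol lam ` Mat_o v"
proof -
  have "r \<in> val_ring v"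
    using val_ring_mult[OF dv lam(1) assms(6)] lam(2) by simp
  then have "mat2 p q r s \<in> Mat_o v"
    using assms by (simp add: mat2_in_Mat_o)
  moreover have "invol lam (mat2 p q r s) \<in> Mat_o v"
    using assms val_ring_mult[OF dv assms(5) lam(1)] by (simp add: invol_mat2 mat2_in_Mat_o)
  then have "mat2 p q r s \<in> invol lam ` Mat_o v"
    using invol_invol[OF lam(2)] by (metis image_eqI)
  ultimately show ?thesis
    by blast
qed

lemma rescaled_coeffs_in_val_ring:
  fixes v :: "'a::field \<Rightarrow> int"
  assumes dv: "discrete_valuation v" and lam: "lam \<noteq> 0" "v lam \<le> 1"
    and rel: "a1 * a2 = lam * d ^ 2" and "d \<noteq> 0"
    and "b \<in> val_ring v" "b * a1 / a2 \<in> val_ring v"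
    and "c \<in> val_ring v" "c * a2 / a1 \<in> val_ring v"
  shows "b / (a2 / d) \<in> val_ring v" and "a2 / d * c / lam \<in> val_ring v"
proof -
  have nz: "a1 \<noteq> 0" "a2 \<noteq> 0"
    using rel lam(1) \<open>d \<noteq> 0\<close> by auto
  have "lam * (b / (a2 / d)) ^ 2 = b * (b * a1 / a2)"
    using rel nz lam(1) \<open>d \<noteq> 0\<close> by (simp add: power2_eq_square field_simps)
  then show "b / (a2 / d) \<in> val_ring v"
    using val_ring_if_times_square_in_val_ring[OF dv lam] val_ring_mult[OF dv] assms(6,7) by metis
  have "lam * (a2 / d * c / lam) ^ 2 = c * (c * a2 / a1)"
    using rel nz lam(1) \<open>d \<noteq> 0\<close> by (simp add: power2_eq_square field_simps)
  then show "a2 / d * c / lam \<in> val_ring v"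
    using val_ring_if_times_square_in_val_ring[OF dv lam] val_ring_mult[OF dv] assms(8,9) by metis
qed

lemma End_o_span_conjugate_of_Mat_o:
  fixes v :: "'a::field \<Rightarrow> int"
  assumes dv: "discrete_valuation v" and lam: "lam \<in> val_ring v" "lam \<noteq> 0" "v lam \<le> 1"
    and orth: "bform lam e1 e2 = 0" and det: "det (basis_matrix e1 e2) \<noteq> 0"
    and \<sigma>: "\<sigma> \<in> End_lat (o_span v e1 e2) \<inter> End_lat (dual_lattice v lam (o_span v e1 e2))"
  defines "g \<equiv> basis_matrix ((bform lam e2 e2 / det (basis_matrix e1 e2)) *s e1) e2"
  shows "\<sigma> \<in> (\<lambda>A. g ** A ** matrix_inv g) ` (Mat_o v \<inter> invol lam ` Mat_o v)"
proof -
  define a1 a2 d s where "a1 = bform lam e1 e1" and "a2 = bform lam e2 e2"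
    and "d = det (basis_matrix e1 e2)" and "s = a2 / d"
  have g: "g = basis_matrix (s *s e1) e2"
    by (simp add: g_def s_def a2_def d_def)
  have rel: "a1 * a2 = lam * d ^ 2"
    using bform_diagonal_mult[of lam e1 e2] orth by (simp add: a1_def a2_def d_def)
  then have nz: "a1 \<noteq> 0" "a2 \<noteq> 0" "s \<noteq> 0"
    using lam(2) det by (auto simp: s_def d_def)
  have "\<sigma> *v e1 \<in> o_span v e1 e2"
    using \<sigma> basis_in_o_span[OF dv] by (auto simp: End_lat_def)
  then obtain a c where ac: "a \<in> val_ring v" "c \<in> val_ring v" "\<sigma> *v e1 = a *s e1 + c *s e2"
    unfolding o_span_def by blast
  have "\<sigma> *v e2 \<in> o_span v e2 e1"
    using \<sigma> basis_in_o_span[OF dv] o_span_commute[of v e1 e2] by (auto simp: End_lat_def)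
  then obtain b t where bt: "b \<in> val_ring v" "t \<in> val_ring v" "\<sigma> *v e2 = t *s e2 + b *s e1"
    unfolding o_span_def by blast
  have "c * a2 / a1 \<in> val_ring v"
    using End_dual_lattice_coeff_in_val_ring[OF dv orth _ _ ac(3)] \<sigma> nz by (simp add: a1_def a2_def)
  moreover have "bform lam e2 e1 = 0"
    using orth by (simp add: bform_commute)
  then have "b * a1 / a2 \<in> val_ring v"
    using End_dual_lattice_coeff_in_val_ring[OF dv _ _ _ bt(3)] \<sigma> nz o_span_commute[of v e2 e1]
    by (simp add: a1_def a2_def)
  ultimately have "mat2 a (b / s) (s * c) t \<in> Mat_o v \<inter> invol lam ` Mat_o v"
    using rescaled_coeffs_in_val_ring[OF dv lam(2,3) rel _ bt(1) _ ac(2)] det ac bt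
    by (intro mat2_in_Mat_o_inter_invol[OF dv lam(1,2)]) (simp_all add: s_def d_def)
  moreover have "\<sigma> ** g = g ** mat2 a (b / s) (s * c) t"
  proof -
    have "s *s (\<sigma> *v e1) = a *s (s *s e1) + (s * c) *s e2"
      using ac(3) by (simp add: vec_eq_iff algebra_simps)
    moreover have "\<sigma> *v e2 = (b / s) *s (s *s e1) + t *s e2"
      using bt(3) nz(3) by (simp add: vec_eq_iff)
    ultimately show ?thesis
      unfolding g matrix_mult_basis_matrix basis_matrix_mult_mat2 vector_scalar_commute by simp
  qed
  moreover have "invertible g"
    using det nz(3) by (simp add: g invertible_det_nz det_basis_matrix d_def algebra_simps)
  ultimately show ?thesis
    using conjugate_eq_if_intertwines by blast
qed

theorem lemma5p5:
  fixes v :: "'a::field \<Rightarrow> int" and lam :: 'a and L :: "('a^2) set"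
  assumes "nonarch_local_field v"
    and "(2::'a) \<noteq> 0"
    and "lam \<in> val_ring v" and "lam \<noteq> 0" and "v lam \<in> {0, 1}"
    and "is_lattice v L"
    and "has_orth_basis v lam L"
  shows "\<exists>g \<in> GO lam.
           End_lat L \<inter> End_lat (dual_lattice v lam L)
             \<subseteq> (\<lambda>A. g ** A ** matrix_inv g) ` (Mat_o v \<inter> invol lam ` Mat_o v)"
proof -
  have dv: "discrete_valuation v"
    using assms(1) by (simp add: nonarch_local_field_def)
  have lam_val: "v lam \<le> 1"
    using assms(5) by auto
  obtain e1 e2 where orth: "bform lam e1 e2 = 0"
    and ind: "\<forall>a c. a \<in> val_ring v \<and> c \<in> val_ring v \<and> a *s e1 + c *s e2 = 0 \<longrightarrow> a = 0 \<and> c = 0"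
    and L: "L = o_span v e1 e2"
    using assms(7) unfolding has_orth_basis_def o_span_def by blast
  have det: "det (basis_matrix e1 e2) \<noteq> 0"
    using det_basis_matrix_nonzero_if_independent independent_if_val_ring_independent[OF dv ind]
    by blast
  show ?thesis
    unfolding L
    using similitude_of_orth_basis_in_GO[OF assms(4) orth det]
      End_o_span_conjugate_of_Mat_o[OF dv assms(3,4) lam_val orth det]
    by blast
qed

end
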